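(* Let $p>3$ be a prime. Then, modulo $p$: $$P_{\frac{p-1}2}(-31)\equiv\sum_{k=0}^{\frac{p-1}2}\binom{2k}k^2\equiv\sum_{k=0}^{\frac{p-1}2}\frac{\binom{2k}k^2}{256^k}\equiv-\Big(\frac p3\Big)\sum_{x=0}^{p-1}\Big(\frac{x^3-723x-7378}p\Big),$$ $$P_{\frac{p-1}2}(33)\equiv\sum_{k=0}^{\frac{p-1}2}(-1)^k\binom{2k}k^2\equiv(-1)^{\frac{p-1}2}\sum_{k=0}^{\frac{p-1}2}\frac{\binom{2k}k^2}{(-256)^k}\equiv(-1)^{\frac{p+1}2}\sum_{x=0}^{p-1}\Big(\frac{x^3-91x+330}p\Big),$$ $$P_{\frac{p-1}2}(-15)\equiv\sum_{k=0}^{\frac{p-1}2}\frac{\binom{2k}k^2}{2^k}\equiv\Big(\frac2p\Big)\sum_{k=0}^{\frac{p-1}2}\frac{\binom{2k}k^2}{128^k}\equiv(-1)^{\frac{p+1}2}\sum_{x=0}^{p-1}\Big(\frac{x^3-19x-30}p\Big),$$ $$P_{\frac{p-1}2}(9)\equiv\sum_{k=0}^{\frac{p-1}2}\frac{\binom{2k}k^2}{(-4)^k}\equiv(-1)^{\frac{p-1}2}\sum_{k=0}^{\frac{p-1}2}\frac{\binom{2k}k^2}{(-64)^k}\equiv(-1)^{\frac{p+1}2}\sum_{x=0}^{p-1}\Big(\frac{x^3-7x+6}p\Big),$$ $$P_{\frac{p-1}2}(5)\equiv\sum_{k=0}^{\frac{p-1}2}\frac{\binom{2k}k^2}{(-8)^k}\equiv\Big(\frac{-2}p\Big)\sum_{k=0}^{\frac{p-1}2}\frac{\binom{2k}k^2}{(-32)^k}\equiv-\Big(\frac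 p3\Big)\sum_{x=0}^{p-1}\Big(\frac{x^3-21x+20}p\Big).$$
   Context: Congruences are between rational numbers whose denominators are prime to $p$. $\big(\frac ap\big)$ is the Legendre symbol (equal to $0$ if $p\mid a$). $P_n(x)$ is the $n$-th Legendre polynomial, defined by $\frac1{\sqrt{1-2xt+t^2}}=\sum_{n\ge0}P_n(x)t^n$, equivalently $P_n(x)=\frac1{2^n}\sum_{k=0}^{[n/2]}\frac{(-1)^k(2n-2k)!}{k!(n-k)!(n-2k)!}x^{n-2k}$. *)

theory Defs
  imports Complex_Main "HOL-Number_Theory.Number_Theory"
begin

definition p_integral :: "nat \<Rightarrow> rat \<Rightarrow> bool" where
  "p_integral p a \<longleftrightarrow> (\<exists>m n :: int. coprime n (int p) \<and> a = of_int m / of_int n)"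

definition qcong :: "rat \<Rightarrow> rat \<Rightarrow> nat \<Rightarrow> bool" where
  "qcong a b p \<longleftrightarrow> p_integral p a \<and> p_integral p b \<and> p_integral p ((a - b) / of_nat p)"

definition legendre_poly :: "nat \<Rightarrow> rat \<Rightarrow> rat" where
  "legendre_poly n x = (1 / 2 ^ n) *
     (\<Sum>k\<le>n div 2. (-1) ^ k * of_nat (fact (2*n - 2*k)) /
        (of_nat (fact k) * of_nat (fact (n - k)) * of_nat (fact (n - 2*k))) * x ^ (n - 2*k))"

end

theory Submission
  imports Defs "HOL-Computational_Algebra.Polynomial"
begin

text \<open>
  Put \<open>n = (p - 1)/2\<close> and \<open>T\<^sub>n(u) = \<Sum>\<^sub>k (n choose k)\<^sup>2 u\<^sup>k\<close> (\<open>binom_sq_poly n u\<close> below).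
  In each of the five rows all four members are congruent modulo \<open>p\<close> to \<open>T\<^sub>n(u)\<close>,
  for \<open>u = 16, -16, 8, -4, -2\<close> respectively. For \<open>P\<^sub>n(1 - 2u)\<close> this follows from Murphy's formula
  \<open>P\<^sub>n(x) = \<Sum>\<^sub>k (n choose k) (n + k choose k) ((x - 1)/2)\<^sup>k\<close> and
  \<open>(n + k choose k) \<equiv> (-1)\<^sup>k (n choose k)\<close>; for \<open>\<Sum>\<^sub>k (2k choose k)\<^sup>2 (u/16)\<^sup>k\<close> from
  \<open>(2k choose k) \<equiv> (-4)\<^sup>k (n choose k)\<close>; the sums with ratio \<open>1/(16u)\<close> then follow from
  \<open>T\<^sub>n(1/u) = u\<^sup>-\<^sup>n T\<^sub>n(u)\<close> and Euler's criterion. Finally, for the cubic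
  \<open>(x - r)(x - r - a)(x - r - au)\<close>, Euler's criterion replaces the Legendre symbol by the
  \<open>n\<close>-th power, and summing over all residues leaves minus the coefficient of \<open>x\<^sup>p\<^sup>-\<^sup>1\<close>
  in \<open>(x(x - a)(x - au))\<^sup>n\<close>, which is \<open>(-a)\<^sup>n T\<^sub>n(u)\<close>.
\<close>

section \<open>Rationals integral at \<open>p\<close>\<close>

lemma p_integral_of_int_divide: "coprime d (int p) \<Longrightarrow> p_integral p (of_int m / of_int d)"
  unfolding p_integral_def by blast

lemma p_integral_of_int [simp]: "p_integral p (of_int m)"
  using p_integral_of_int_divide[of 1 p m] by simp

lemma p_integral_of_nat [simp]: "p_integral p (of_nat m)"
  using p_integral_of_int[of p "int m"] by simp

lemma p_integralE:
  assumes "prime p" "p_integral p a"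
  obtains m d where "coprime d (int p)" "d \<noteq> 0" "a = of_int m / of_int d"
proof -
  obtain m d where md: "coprime d (int p)" "a = of_int m / of_int d"
    using assms(2) unfolding p_integral_def by blast
  have "d \<noteq> 0" using md(1) assms(1) by (auto simp: prime_gt_1_nat)
  with md that show ?thesis by blast
qed

lemma p_integral_add:
  assumes p: "prime p" and "p_integral p a" "p_integral p b"
  shows "p_integral p (a + b)"
proof -
  obtain m1 d1 where 1: "coprime d1 (int p)" "d1 \<noteq> 0" "a = of_int m1 / of_int d1"
    using p_integralE[OF p \<open>p_integral p a\<close>] .
  obtain m2 d2 where 2: "coprime d2 (int p)" "d2 \<noteq> 0" "b = of_int m2 / of_int d2"
    using p_integralE[OF p \<open>p_integral p b\<close>] .
  have "a + b = of_int (m1 * d2 + m2 * d1) / of_int (d1 * d2)"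
    using 1 2 by (simp add: field_simps)
  with 1 2 show ?thesis by (metis p_integral_of_int_divide coprime_mult_left_iff)
qed

lemma p_integral_mult:
  assumes p: "prime p" and "p_integral p a" "p_integral p b"
  shows "p_integral p (a * b)"
proof -
  obtain m1 d1 where 1: "coprime d1 (int p)" "d1 \<noteq> 0" "a = of_int m1 / of_int d1"
    using p_integralE[OF p \<open>p_integral p a\<close>] .
  obtain m2 d2 where 2: "coprime d2 (int p)" "d2 \<noteq> 0" "b = of_int m2 / of_int d2"
    using p_integralE[OF p \<open>p_integral p b\<close>] .
  have "a * b = of_int (m1 * m2) / of_int (d1 * d2)"
    using 1 2 by (simp add: field_simps)
  with 1 2 show ?thesis by (metis p_integral_of_int_divide coprime_mult_left_iff)
qed

lemma p_integral_divide:
  assumes p: "prime p" and "p_integral p a" "coprime d (int p)"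
  shows "p_integral p (a / of_int d)"
proof -
  obtain m e where e: "coprime e (int p)" "e \<noteq> 0" "a = of_int m / of_int e"
    using p_integralE[OF p \<open>p_integral p a\<close>] .
  have "a / of_int d = of_int m / of_int (e * d)" using e by simp
  with e assms(3) show ?thesis by (metis p_integral_of_int_divide coprime_mult_left_iff)
qed

lemma p_integral_uminus: "p_integral p a \<Longrightarrow> p_integral p (- a)"
  unfolding p_integral_def by (metis minus_divide_left of_int_minus)

lemma p_integral_sum:
  "prime p \<Longrightarrow> (\<And>x. x \<in> A \<Longrightarrow> p_integral p (f x)) \<Longrightarrow> p_integral p (\<Sum>x\<in>A. f x)"
  by (induction A rule: infinite_finite_induct)
     (use p_integral_of_int[of p 0] p_integral_add in auto)

lemma p_integral_power: "prime p \<Longrightarrow> p_integral p a \<Longrightarrow> p_integral p (a ^ k)"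
  by (induction k) (use p_integral_of_int[of p 1] p_integral_mult in auto)

lemma qcong_refl: "p_integral p a \<Longrightarrow> qcong a a p"
  unfolding qcong_def using p_integral_of_int[of p 0] by simp

lemma qcong_sym: "qcong a b p \<Longrightarrow> qcong b a p"
  unfolding qcong_def by (metis minus_diff_eq minus_divide_left p_integral_uminus)

lemma qcong_trans:
  assumes p: "prime p" and "qcong a b p" "qcong b c p"
  shows "qcong a c p"
proof -
  have "(a - c) / of_nat p = (a - b) / of_nat p + (b - c) / of_nat p"
    unfolding add_divide_distrib[symmetric] by simp
  with assms show ?thesis unfolding qcong_def by (metis p_integral_add)
qed

lemma qcong_add:
  assumes p: "prime p" and "qcong a b p" "qcong c d p"
  shows "qcong (a + c) (b + d) p"
proof -
  have "(a + c - (b + d)) / of_nat p = (a - b) / of_nat p + (c - d) / of_nat p"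
    unfolding add_divide_distrib[symmetric] by simp
  with assms show ?thesis unfolding qcong_def by (metis p_integral_add)
qed

lemma qcong_mult:
  assumes p: "prime p" and "qcong a b p" "qcong c d p"
  shows "qcong (a * c) (b * d) p"
proof -
  have "(a * c - b * d) / of_nat p = a * ((c - d) / of_nat p) + d * ((a - b) / of_nat p)"
    unfolding times_divide_eq_right add_divide_distrib[symmetric] by (simp add: algebra_simps)
  with assms show ?thesis unfolding qcong_def by (metis p_integral_add p_integral_mult)
qed

lemma qcong_sum:
  "prime p \<Longrightarrow> (\<And>x. x \<in> A \<Longrightarrow> qcong (f x) (g x) p) \<Longrightarrow> qcong (\<Sum>x\<in>A. f x) (\<Sum>x\<in>A. g x) p"
  by (induction A rule: infinite_finite_induct)
     (use qcong_refl[OF p_integral_of_int[of p 0]] qcong_add in auto)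

lemma qcong_of_int:
  assumes p: "prime p" and "[a = b] (mod int p)"
  shows "qcong (of_int a) (of_int b) p"
proof -
  obtain c where "a - b = int p * c"
    using assms(2) unfolding cong_iff_dvd_diff by (elim dvdE)
  then have "(of_int a - of_int b) / of_nat p = (of_int c :: rat)"
    using p by (simp add: prime_gt_0_nat flip: of_int_diff)
  then show ?thesis unfolding qcong_def by simp
qed

lemma qcong_of_int_mult:
  "prime p \<Longrightarrow> [a = b] (mod int p) \<Longrightarrow> p_integral p c \<Longrightarrow> qcong (of_int a * c) (of_int b * c) p"
  by (intro qcong_mult qcong_of_int qcong_refl)

lemma qcong_inverse_of_int:
  assumes p: "prime p" and ab: "[a * b = 1] (mod int p)"
  shows "qcong (1 / of_int a) (of_int b) p"
proof -
  have "coprime a (int p)"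
    using ab by (metis cong_imp_coprime cong_sym coprime_1_left coprime_mult_left_iff)
  then have a0: "a \<noteq> 0" using p by (auto simp: prime_gt_1_nat)
  obtain c where c: "1 - a * b = int p * c"
    using cong_sym[OF ab] unfolding cong_iff_dvd_diff by (elim dvdE)
  have "(1 / of_int a - of_int b) / of_nat p = (of_int c / of_int a :: rat)"
  proof -
    have "(1 / of_int a - of_int b :: rat) = of_int (1 - a * b) / of_int a"
      using a0 by (simp add: field_simps)
    also have "\<dots> = of_nat p * (of_int c / of_int a)" unfolding c by simp
    finally show ?thesis using p by (simp add: prime_gt_0_nat)
  qed
  with \<open>coprime a (int p)\<close> show ?thesis
    unfolding qcong_def by (metis p_integral_of_int p_integral_of_int_divide of_int_1)
qed

lemma qcong_chain:
  assumes "prime p" "qcong a t p" "qcong b t p" "qcong c t p" "qcong d t p"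
  shows "qcong a b p \<and> qcong b c p \<and> qcong c d p"
  using assms by (meson qcong_sym qcong_trans)

section \<open>Sums over the residues modulo a prime\<close>

lemma coprime_less_prime:
  assumes "prime p" "0 < k" "k < p"
  shows "coprime (int k) (int p)"
proof -
  have "\<not> p dvd k" using assms by (auto dest: dvd_imp_le)
  then have "coprime p k" using assms(1) prime_imp_coprime by blast
  then show ?thesis by (simp add: coprime_commute)
qed

lemma coprime_fact_less_prime:
  assumes "prime p" "k < p"
  shows "coprime (int (fact k)) (int p)"
proof -
  have "\<not> p dvd fact k" using assms prime_dvd_fact_iff by auto
  then have "coprime (fact k) p" using assms(1) prime_imp_coprime coprime_commute by blast
  then show ?thesis using coprime_int_iff[of "fact k" p] by simp
qed

lemma fermat_theorem_int:
  assumes p: "prime p" and x: "x \<in> {1..<int p}"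
  shows "[x ^ (p - 1) = 1] (mod int p)"
proof -
  have "\<not> p dvd nat x" using x by (auto dest: dvd_imp_le)
  then have "[nat x ^ (p - 1) = 1] (mod p)" using fermat_theorem[OF p] by blast
  then have "[int (nat x ^ (p - 1)) = int 1] (mod int p)" using cong_int_iff by blast
  then show ?thesis using x by simp
qed

lemma cong_uminus_pow:
  fixes c :: int
  assumes "[c ^ n = 1] (mod m)"
  shows "[(- c) ^ n = (-1) ^ n] (mod m)"
proof -
  have "[(-1) ^ n * c ^ n = (-1) ^ n * 1] (mod m)"
    using assms by (rule cong_mult[OF cong_refl])
  then show ?thesis by (simp only: power_minus[of c n] mult_1_right)
qed

lemma Legendre_cong:
  assumes "[u = v] (mod m)"
  shows "Legendre u m = Legendre v m"
proof -
  have "[u = 0] (mod m) \<longleftrightarrow> [v = 0] (mod m)"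
    using assms cong_sym cong_trans by metis
  moreover have "QuadRes m u \<longleftrightarrow> QuadRes m v"
    unfolding QuadRes_def using assms cong_sym cong_trans by metis
  ultimately show ?thesis unfolding Legendre_def by simp
qed

lemma Legendre_square: "\<not> [a = 0] (mod m) \<Longrightarrow> (Legendre a m)\<^sup>2 = 1"
  unfolding Legendre_def by simp

lemma Legendre_square_small:
  assumes "c \<noteq> 0" "\<bar>c\<bar> < m"
  shows "(Legendre c m)\<^sup>2 = 1"
proof (rule Legendre_square)
  show "\<not> [c = 0] (mod m)"
    using assms by (auto simp: cong_0_iff dest: dvd_imp_le_int)
qed

lemma sum_pow_residues_cong_0:
  assumes p: "prime p" and j: "\<not> (p - 1) dvd j"
  shows "[(\<Sum>x\<in>{1..<int p}. x ^ j) = 0] (mod int p)"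
proof -
  obtain g where g: "residue_primroot p g"
    using prime_primitive_root_exists p prime_gt_1_nat by blast
  then have "coprime (int g) (int p)" and ord: "ord p g = p - 1"
    using p by (auto simp: residue_primroot_def totient_prime coprime_commute)
  define S where "S = (\<Sum>x\<in>{1..<int p}. x ^ j)"
  have "S = (\<Sum>m\<in>{1..<int p}. (int g * m mod int p) ^ j)"
    unfolding S_def
    using sum.reindex_bij_betw[OF bij_betw_int_remainders_mult[OF \<open>coprime _ _\<close>], of "\<lambda>x. x ^ j"]
    by simp
  also have "[\<dots> = (\<Sum>m\<in>{1..<int p}. (int g * m) ^ j)] (mod int p)"
    by (intro cong_sum cong_pow) (simp add: cong_def)
  also have "(\<Sum>m\<in>{1..<int p}. (int g * m) ^ j) = int g ^ j * S"
    unfolding S_def by (simp add: sum_distrib_left power_mult_distrib)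
  finally have "[int g ^ j * S = 1 * S] (mod int p)" by (simp add: cong_sym)
  then have "int p dvd (int g ^ j - 1) * S" by (simp add: cong_iff_dvd_diff algebra_simps)
  moreover have "\<not> int p dvd int g ^ j - 1"
  proof
    assume "int p dvd int g ^ j - 1"
    then have "[int (g ^ j) = int 1] (mod int p)" by (simp add: cong_iff_dvd_diff)
    then have "[g ^ j = 1] (mod p)" using cong_int_iff by blast
    then have "ord p g dvd j" using ord_divides by blast
    with ord j show False by simp
  qed
  moreover have "prime (int p)" using p by simp
  ultimately have "int p dvd S" using prime_dvd_mult_iff by blast
  then show ?thesis unfolding S_def by (simp add: cong_0_iff)
qed

lemma sum_pow_residues_cong:
  assumes p: "prime p" and i: "i < 2 * (p - 1)"
  shows "[(\<Sum>x\<in>{0..<int p}. x ^ i) = (if i = p - 1 then -1 else 0)] (mod int p)"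
proof -
  have p2: "p \<ge> 2" using prime_ge_2_nat p by blast
  have split: "{0..<int p} = insert 0 {1..<int p}" using p2 by auto
  have "i = 0 \<or> i = p - 1" if dvd: "(p - 1) dvd i"
  proof -
    obtain c where c: "i = (p - 1) * c" using dvd by blast
    with i have "c < 2" by simp
    then show ?thesis using c by (auto simp: less_2_cases_iff)
  qed
  then consider "i = 0" | "i = p - 1" | "i \<noteq> 0" "\<not> (p - 1) dvd i" by blast
  then show ?thesis
  proof cases
    case 1
    then show ?thesis using p2 by (simp add: cong_0_iff)
  next
    case 2
    have "[(\<Sum>x\<in>{1..<int p}. x ^ i) = (\<Sum>x\<in>{1..<int p}. 1)] (mod int p)"
      using fermat_theorem_int[OF p] 2 by (intro cong_sum) auto
    moreover have "[(\<Sum>x\<in>{1..<int p}. 1) = (-1 :: int)] (mod int p)"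
      using p2 by (simp add: cong_iff_dvd_diff)
    ultimately have "[(\<Sum>x\<in>{1..<int p}. x ^ i) = -1] (mod int p)" by (rule cong_trans)
    then show ?thesis using 2 p2 unfolding split by (simp add: power_0_left)
  next
    case 3
    then have "i \<noteq> p - 1" by auto
    with 3 show ?thesis
      using sum_pow_residues_cong_0[OF p, of i] p2 unfolding split by (simp add: power_0_left)
  qed
qed

lemma sum_poly_residues_cong:
  fixes Q :: "int poly"
  assumes p: "prime p" and d: "degree Q < 2 * (p - 1)"
  shows "[(\<Sum>y\<in>{0..<int p}. poly Q y) = - coeff Q (p - 1)] (mod int p)"
proof -
  define N where "N = 2 * (p - 1)"
  have "p \<ge> 2" using prime_ge_2_nat p by blast
  have poly_Q: "poly Q y = (\<Sum>i<N. coeff Q i * y ^ i)" for y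
    unfolding poly_altdef N_def
    by (rule sum.mono_neutral_left) (use d in \<open>auto simp: coeff_eq_0\<close>)
  have "(\<Sum>y\<in>{0..<int p}. poly Q y) = (\<Sum>i<N. coeff Q i * (\<Sum>y\<in>{0..<int p}. y ^ i))"
    unfolding poly_Q sum_distrib_left by (rule sum.swap)
  also have "[\<dots> = (\<Sum>i<N. coeff Q i * (if i = p - 1 then -1 else 0))] (mod int p)"
    using sum_pow_residues_cong[OF p] unfolding N_def by (intro cong_sum cong_mult cong_refl) auto
  also have "(\<Sum>i<N. coeff Q i * (if i = p - 1 then -1 else 0)) = - coeff Q (p - 1)"
    using \<open>p \<ge> 2\<close> unfolding N_def by (simp add: if_distrib cong: if_cong)
  finally show ?thesis .
qed

lemma sum_residues_shift:
  fixes P r :: int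
  assumes "P > 0" and periodic: "\<And>x. f (x mod P) = f x"
  shows "(\<Sum>x\<in>{0..<P}. f x) = (\<Sum>y\<in>{0..<P}. f (y + r))"
proof -
  have bij: "bij_betw (\<lambda>y. (y + r) mod P) {0..<P} {0..<P}"
  proof (rule bij_betwI[where g = "\<lambda>x. (x - r) mod P"])
    fix x assume "x \<in> {0..<P}"
    then show "((x + r) mod P - r) mod P = x" by (simp add: mod_diff_left_eq)
  next
    fix y assume "y \<in> {0..<P}"
    then show "((y - r) mod P + r) mod P = y" by (simp add: mod_add_left_eq)
  qed (use \<open>P > 0\<close> in auto)
  have "(\<Sum>x\<in>{0..<P}. f x) = (\<Sum>y\<in>{0..<P}. f ((y + r) mod P))"
    using sum.reindex_bij_betw[OF bij, of f] by simp
  then show ?thesis by (simp only: periodic)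
qed

lemma coeff_cubic_power:
  fixes a b :: int
  shows "coeff (([:0, 1:] * [:-a, 1:] * [:-b, 1:]) ^ n) (2 * n)
     = (-1) ^ n * (\<Sum>k\<le>n. int ((n choose k)\<^sup>2) * a ^ (n - k) * b ^ k)"
proof -
  have "monom 1 n = [:0, 1 :: int:] ^ n" by (simp add: monom_altdef)
  then have "([:0, 1:] * [:-a, 1:] * [:-b, 1:]) ^ n = monom 1 n * ([:-a, 1:] ^ n * [:-b, 1:] ^ n)"
    by (simp only: power_mult_distrib mult.assoc)
  then have "coeff (([:0, 1:] * [:-a, 1:] * [:-b, 1:]) ^ n) (2 * n)
      = coeff ([:-a, 1:] ^ n * [:-b, 1:] ^ n) n"
    by (simp add: coeff_monom_mult mult_2)
  also have "\<dots> = (\<Sum>i\<le>n. coeff ([:-a, 1:] ^ n) i * coeff ([:-b, 1:] ^ n) (n - i))"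
    by (rule coeff_mult)
  also have "\<dots> = (\<Sum>i\<le>n. (-1) ^ n * (int ((n choose i)\<^sup>2) * a ^ (n - i) * b ^ i))"
  proof (rule sum.cong[OF refl])
    fix i assume "i \<in> {..n}"
    then have i: "i \<le> n" by simp
    have "(-a) ^ (n - i) * (-b) ^ i = (-1) ^ (n - i + i) * (a ^ (n - i) * b ^ i)"
      by (simp only: power_minus[of a] power_minus[of b] power_add mult_ac)
    with i show "coeff ([:-a, 1:] ^ n) i * coeff ([:-b, 1:] ^ n) (n - i)
        = (-1) ^ n * (int ((n choose i)\<^sup>2) * a ^ (n - i) * b ^ i)"
      by (simp add: coeff_linear_poly_power binomial_symmetric[OF i, symmetric] power2_eq_square)
  qed
  also have "\<dots> = (-1) ^ n * (\<Sum>k\<le>n. int ((n choose k)\<^sup>2) * a ^ (n - k) * b ^ k)"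
    by (simp add: sum_distrib_left)
  finally show ?thesis .
qed

section \<open>Legendre polynomials\<close>

lemma sum_atMost_rev: "(\<Sum>k\<le>(n::nat). f k) = (\<Sum>k\<le>n. f (n - k))"
  by (rule sum.reindex_bij_witness[where i="\<lambda>i. n - i" and j="\<lambda>i. n - i"]) auto

text \<open>Murphy's formula comes from comparing two expansions of the coefficient of
  \<open>t\<^sup>n\<close> in \<open>((x + t)\<^sup>2 - 1)\<^sup>n\<close>, which by Rodrigues' formula is \<open>2\<^sup>n P\<^sub>n(x)\<close>.\<close>
lemma coeff_power_square_minus_one_legendre_poly:
  fixes x :: rat
  shows "coeff (([:x, 1:]\<^sup>2 - 1) ^ n) n = 2 ^ n * legendre_poly n x"
proof -
  define B where "B = [:x, 1:]"
  have minus_one: "B\<^sup>2 - 1 = B\<^sup>2 + [:-1:]" by (simp add: one_pCons)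
  have "(B\<^sup>2 - 1) ^ n = (\<Sum>k\<le>n. of_nat (n choose k) * (B\<^sup>2) ^ k * [:-1:] ^ (n - k))"
    unfolding minus_one by (rule binomial_ring)
  also have "\<dots> = (\<Sum>k\<le>n. [:of_nat (n choose k) * (-1) ^ (n - k):] * B ^ (2 * k))"
    by (simp add: poly_const_pow of_nat_poly mult_ac flip: power_mult)
  finally have "coeff ((B\<^sup>2 - 1) ^ n) n
      = (\<Sum>k\<le>n. of_nat (n choose k) * (-1) ^ (n - k) * coeff (B ^ (2 * k)) n)"
    by (simp add: coeff_sum)
  also have "\<dots> = (\<Sum>m\<le>n. of_nat (n choose (n - m)) * (-1) ^ (n - (n - m)) * coeff (B ^ (2 * (n - m))) n)"
    by (rule sum_atMost_rev)
  also have "\<dots> = (\<Sum>m\<le>n div 2. (-1) ^ m * of_nat (fact (2 * n - 2 * m)) /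
        (of_nat (fact m) * of_nat (fact (n - m)) * of_nat (fact (n - 2 * m))) * x ^ (n - 2 * m))"
  proof (rule sum.mono_neutral_cong_right)
    show "\<forall>m\<in>{..n} - {..n div 2}.
        of_nat (n choose (n - m)) * (-1) ^ (n - (n - m)) * coeff (B ^ (2 * (n - m))) n = 0"
      unfolding B_def by (auto intro!: coeff_eq_0 simp: degree_power_eq)
  next
    fix m assume "m \<in> {..n div 2}"
    then have m: "2 * m \<le> n" by auto
    then have e: "2 * (n - m) - n = n - 2 * m" "n - (n - m) = m" "2 * n - 2 * m = 2 * (n - m)"
      by auto
    have c: "coeff (B ^ (2 * (n - m))) n = of_nat (2 * (n - m) choose n) * x ^ (n - 2 * m)"
      unfolding B_def using m by (simp add: coeff_linear_poly_power e)
    have b1: "(of_nat (n choose (n - m)) :: rat) = fact n / (fact m * fact (n - m))"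
      using binomial_fact[of "n - m" n] e by (simp add: mult.commute)
    have b2: "(of_nat (2 * (n - m) choose n) :: rat) = fact (2 * (n - m)) / (fact n * fact (n - 2 * m))"
      using binomial_fact[of n "2 * (n - m)"] m e by fastforce
    show "of_nat (n choose (n - m)) * (-1) ^ (n - (n - m)) * coeff (B ^ (2 * (n - m))) n =
        (-1) ^ m * of_nat (fact (2 * n - 2 * m)) /
        (of_nat (fact m) * of_nat (fact (n - m)) * of_nat (fact (n - 2 * m))) * x ^ (n - 2 * m)"
      unfolding c b1 b2 e by (simp add: field_simps)
  qed auto
  also have "\<dots> = 2 ^ n * legendre_poly n x"
    unfolding legendre_poly_def by simp
  finally show ?thesis unfolding B_def .
qed

lemma coeff_power_square_minus_one:
  fixes x :: rat
  shows "coeff (([:x, 1:]\<^sup>2 - 1) ^ n) n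
    = (\<Sum>j\<le>n. of_nat (n choose j) * of_nat (n + j choose j) * 2 ^ (n - j) * (x - 1) ^ j)"
proof -
  define A where "A = [:x - 1, 1:]"
  have factor: "[:x, 1:]\<^sup>2 - 1 = A * (A + [:2:])"
    unfolding A_def by (simp add: power2_eq_square algebra_simps one_pCons)
  have "(A + [:2:]) ^ n = (\<Sum>k\<le>n. of_nat (n choose k) * A ^ k * [:2:] ^ (n - k))"
    by (rule binomial_ring)
  then have "([:x, 1:]\<^sup>2 - 1) ^ n = (\<Sum>k\<le>n. [:of_nat (n choose k) * 2 ^ (n - k):] * A ^ (n + k))"
    unfolding factor power_mult_distrib
    by (simp add: sum_distrib_left of_nat_poly power_add algebra_simps poly_const_pow flip: mult.assoc)
  then have "coeff (([:x, 1:]\<^sup>2 - 1) ^ n) n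
      = (\<Sum>k\<le>n. of_nat (n choose k) * 2 ^ (n - k) * coeff (A ^ (n + k)) n)"
    by (simp add: coeff_sum)
  also have "\<dots> = (\<Sum>j\<le>n. of_nat (n choose j) * of_nat (n + j choose j) * 2 ^ (n - j) * (x - 1) ^ j)"
  proof (intro sum.cong refl)
    fix k assume "k \<in> {..n}"
    have "coeff (A ^ (n + k)) n = of_nat (n + k choose n) * (x - 1) ^ k"
      unfolding A_def by (simp add: coeff_linear_poly_power)
    moreover have "n + k choose n = n + k choose k" using binomial_symmetric[of k "n + k"] by simp
    ultimately show "of_nat (n choose k) * 2 ^ (n - k) * coeff (A ^ (n + k)) n
        = of_nat (n choose k) * of_nat (n + k choose k) * 2 ^ (n - k) * (x - 1) ^ k"
      by simp
  qed
  finally show ?thesis .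
qed

lemma legendre_poly_murphy:
  "legendre_poly n (x :: rat) = (\<Sum>j\<le>n. of_nat (n choose j) * of_nat (n + j choose j) * ((x - 1) / 2) ^ j)"
proof -
  have "2 ^ n * legendre_poly n x
      = (\<Sum>j\<le>n. of_nat (n choose j) * of_nat (n + j choose j) * 2 ^ (n - j) * (x - 1) ^ j)"
    using coeff_power_square_minus_one_legendre_poly coeff_power_square_minus_one by metis
  also have "\<dots> = 2 ^ n * (\<Sum>j\<le>n. of_nat (n choose j) * of_nat (n + j choose j) * ((x - 1) / 2) ^ j)"
    unfolding sum_distrib_left
  proof (intro sum.cong refl)
    fix j assume "j \<in> {..n}"
    then have "(2 :: rat) ^ n = 2 ^ (n - j) * 2 ^ j" by (simp flip: power_add)
    then show "of_nat (n choose j) * of_nat (n + j choose j) * 2 ^ (n - j) * (x - 1) ^ j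
        = 2 ^ n * (of_nat (n choose j) * of_nat (n + j choose j) * ((x - 1) / 2) ^ j)"
      by (simp add: power_divide)
  qed
  finally show ?thesis by simp
qed

definition binom_sq_poly :: "nat \<Rightarrow> rat \<Rightarrow> rat" where
  "binom_sq_poly n u = (\<Sum>k\<le>n. of_nat ((n choose k)\<^sup>2) * u ^ k)"

lemma binom_sq_poly_reflect:
  assumes "u \<noteq> 0"
  shows "binom_sq_poly n (1 / u) = (1 / u) ^ n * binom_sq_poly n u"
proof -
  have "binom_sq_poly n u = (\<Sum>k\<le>n. of_nat ((n choose (n - k))\<^sup>2) * u ^ (n - k))"
    unfolding binom_sq_poly_def by (rule sum_atMost_rev)
  also have "\<dots> = u ^ n * binom_sq_poly n (1 / u)"
    unfolding binom_sq_poly_def sum_distrib_left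
  proof (intro sum.cong refl)
    fix k assume k: "k \<in> {..n}"
    then have "u ^ n = u ^ (n - k) * u ^ k" by (simp flip: power_add)
    with k assms show "of_nat ((n choose (n - k))\<^sup>2) * u ^ (n - k) = u ^ n * (of_nat ((n choose k)\<^sup>2) * (1 / u) ^ k)"
      by (simp add: binomial_symmetric[symmetric] power_one_over field_simps)
  qed
  finally show ?thesis using assms by (simp add: power_one_over field_simps)
qed

lemma p_integral_binom_sq_poly:
  "prime p \<Longrightarrow> p_integral p u \<Longrightarrow> p_integral p (binom_sq_poly n u)"
  unfolding binom_sq_poly_def
  by (intro p_integral_sum p_integral_mult p_integral_of_nat p_integral_power) auto

lemma sum_divide_power: "(\<Sum>k\<le>n. f k / (d :: rat) ^ k) = (\<Sum>k\<le>n. f k * (1 / d) ^ k)"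
  by (simp add: power_one_over)

lemma minus_one_power_square: "((-1 :: int) ^ n)\<^sup>2 = 1"
  by (simp flip: power_mult)

section \<open>Congruences modulo an odd prime \<open>p = 2n + 1\<close>\<close>

context
  fixes p n :: nat
  assumes prime: "prime p" and p_eq: "2 * n + 1 = p"
begin

lemma n_pos: "n \<ge> 1"
  using prime p_eq by (cases n) auto

lemma p_gt_2: "p > 2"
  using n_pos p_eq by simp

lemma p_minus_1: "p - 1 = 2 * n"
  unfolding p_eq[symmetric] by simp

lemma half_p_minus_1: "(p - 1) div 2 = n"
  unfolding p_minus_1 by simp

lemmas qcong_trans_prime [trans] = qcong_trans[OF prime]

lemma coprime_16: "coprime (16 :: int) (int p)"
proof -
  have "odd (int p)" unfolding p_eq[symmetric] by simp
  then have "coprime (2 :: int) (int p)" by simp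
  then show ?thesis using coprime_power_left_iff[of "2 :: int" 4 "int p"] by simp
qed

text \<open>Since \<open>n \<equiv> -1/2 (mod p)\<close>, the identities
  \<open>(n + k choose k) = (-1)\<^sup>k (-n - 1 choose k)\<close> and \<open>(2k choose k) = (-4)\<^sup>k (-1/2 choose k)\<close>
  become the following two congruences.\<close>
lemma binomial_add_cong:
  "k \<le> n \<Longrightarrow> [int (n + k choose k) = (-1) ^ k * int (n choose k)] (mod int p)"
proof (induction k)
  case 0
  then show ?case by simp
next
  case (Suc k)
  have IH: "[int (n + k choose k) = (-1) ^ k * int (n choose k)] (mod int p)"
    using Suc by simp
  have rec_add: "int (Suc k) * int (n + Suc k choose Suc k) = int (Suc (n + k)) * int (n + k choose k)"
    using Suc_times_binomial[of k "n + k"] by (metis add_Suc_right of_nat_mult)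
  have rec: "int (Suc k) * int (n choose Suc k) = int (n - k) * int (n choose k)"
    using binomial_absorb_comp[of n k] binomial_absorption[of k n] by (metis of_nat_mult)
  have "[int (Suc (n + k)) = - int (n - k)] (mod int p)"
    using Suc.prems p_eq by (auto simp: cong_iff_dvd_diff of_nat_diff)
  then have "[int (Suc k) * int (n + Suc k choose Suc k) = (- int (n - k)) * ((-1) ^ k * int (n choose k))] (mod int p)"
    unfolding rec_add by (intro cong_mult IH)
  also have "(- int (n - k)) * ((-1) ^ k * int (n choose k)) = (-1) ^ Suc k * (int (n - k) * int (n choose k))"
    by (simp add: algebra_simps)
  also have "\<dots> = int (Suc k) * ((-1) ^ Suc k * int (n choose Suc k))"
    unfolding rec[symmetric] by (simp add: algebra_simps)
  finally have "[int (Suc k) * int (n + Suc k choose Suc k)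
      = int (Suc k) * ((-1) ^ Suc k * int (n choose Suc k))] (mod int p)" .
  moreover have "coprime (int (Suc k)) (int p)"
    using coprime_less_prime[OF prime, of "Suc k"] Suc.prems p_eq by simp
  ultimately show ?case using cong_mult_lcancel by blast
qed

lemma fact_double_cong:
  "k \<le> n \<Longrightarrow> [int (fact (2 * k)) = (-4) ^ k * int (n choose k) * int (fact k) ^ 2] (mod int p)"
proof (induction k)
  case 0
  then show ?case by simp
next
  case (Suc k)
  have IH: "[int (fact (2 * k)) = (-4) ^ k * int (n choose k) * int (fact k) ^ 2] (mod int p)"
    using Suc by simp
  have rec: "int (Suc k) * int (n choose Suc k) = int (n - k) * int (n choose k)"
    using binomial_absorb_comp[of n k] binomial_absorption[of k n] by (metis of_nat_mult)
  have "int p = 2 * int n + 1" using p_eq by linarith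
  then have "(2 * int k + 2) * (2 * int k + 1) - (-4) * (int k + 1) * int (n - k) = (2 * int k + 2) * int p"
    using Suc.prems by (simp add: of_nat_diff algebra_simps)
  then have "[(2 * int k + 2) * (2 * int k + 1) = (-4) * (int k + 1) * int (n - k)] (mod int p)"
    by (simp add: cong_iff_dvd_diff)
  then have "[(2 * int k + 2) * (2 * int k + 1) * int (fact (2 * k))
      = ((-4) * (int k + 1) * int (n - k)) * ((-4) ^ k * int (n choose k) * int (fact k) ^ 2)] (mod int p)"
    by (rule cong_mult[OF _ IH])
  also have "((-4) * (int k + 1) * int (n - k)) * ((-4) ^ k * int (n choose k) * int (fact k) ^ 2)
      = (-4) ^ Suc k * (int (n - k) * int (n choose k)) * (int k + 1) * int (fact k) ^ 2"
    by (simp add: algebra_simps)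
  also have "\<dots> = (-4) ^ Suc k * int (n choose Suc k) * int (fact (Suc k)) ^ 2"
    unfolding rec[symmetric] by (simp add: algebra_simps power2_eq_square)
  also have "(2 * int k + 2) * (2 * int k + 1) * int (fact (2 * k)) = int (fact (2 * Suc k))"
    by (simp add: algebra_simps)
  finally show ?case by simp
qed

lemma central_binomial_cong:
  assumes "k \<le> n"
  shows "[int (2 * k choose k) = (-4) ^ k * int (n choose k)] (mod int p)"
proof -
  have "fact (2 * k) = (fact k) ^ 2 * (2 * k choose k)"
    using binomial_fact_lemma[of k "2 * k"] by (simp add: power2_eq_square algebra_simps)
  then have "int (fact (2 * k)) = int (fact k) ^ 2 * int (2 * k choose k)"
    by (metis of_nat_mult of_nat_power)
  then have "[int (fact k) ^ 2 * int (2 * k choose k) = int (fact k) ^ 2 * ((-4) ^ k * int (n choose k))] (mod int p)"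
    using fact_double_cong[OF assms] by (simp add: algebra_simps)
  moreover have "coprime (int (fact k) ^ 2) (int p)"
    using coprime_fact_less_prime[OF prime] assms p_eq by simp
  ultimately show ?thesis using cong_mult_lcancel by blast
qed

lemma Legendre_cubic_sum_cong:
  fixes r a b :: int
  shows "[(\<Sum>x\<in>{0..<int p}. Legendre ((x - r) * (x - r - a) * (x - r - b)) (int p))
        = - ((-1) ^ n * (\<Sum>k\<le>n. int ((n choose k)\<^sup>2) * a ^ (n - k) * b ^ k))] (mod int p)"
proof -
  define Q where "Q = ([:0, 1:] * [:-a, 1:] * [:-b, 1:]) ^ n"
  have periodic: "Legendre ((x mod int p - r) * (x mod int p - r - a) * (x mod int p - r - b)) (int p)
      = Legendre ((x - r) * (x - r - a) * (x - r - b)) (int p)" for x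
    by (intro Legendre_cong cong_mult cong_diff cong_refl) (simp_all add: cong_def)
  have "(\<Sum>x\<in>{0..<int p}. Legendre ((x - r) * (x - r - a) * (x - r - b)) (int p))
      = (\<Sum>y\<in>{0..<int p}. Legendre (y * (y - a) * (y - b)) (int p))"
    using sum_residues_shift[where P = "int p" and r = r
        and f = "\<lambda>x. Legendre ((x - r) * (x - r - a) * (x - r - b)) (int p)"] periodic prime
    by (simp add: prime_gt_0_nat)
  also have "[\<dots> = (\<Sum>y\<in>{0..<int p}. (y * (y - a) * (y - b)) ^ n)] (mod int p)"
    using euler_criterion[OF prime p_gt_2] half_p_minus_1 by (intro cong_sum) auto
  also have "(\<Sum>y\<in>{0..<int p}. (y * (y - a) * (y - b)) ^ n) = (\<Sum>y\<in>{0..<int p}. poly Q y)"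
    unfolding Q_def by (simp add: poly_power algebra_simps)
  also have "[\<dots> = - coeff Q (p - 1)] (mod int p)"
  proof (rule sum_poly_residues_cong[OF prime])
    have "degree ([:0, 1:] * [:-a, 1:] * [:-b, 1 :: int:]) \<le> 3"
      by (rule order.trans[OF degree_mult_le])
         (auto intro: order.trans[OF add_mono[OF degree_mult_le order.refl]])
    then have "degree Q \<le> 3 * n"
      unfolding Q_def by (intro order.trans[OF degree_power_le]) (simp add: mult.commute)
    then show "degree Q < 2 * (p - 1)" using n_pos p_eq by linarith
  qed
  also have "coeff Q (p - 1) = (-1) ^ n * (\<Sum>k\<le>n. int ((n choose k)\<^sup>2) * a ^ (n - k) * b ^ k)"
    unfolding Q_def p_minus_1 by (rule coeff_cubic_power)
  finally show ?thesis .
qed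

lemma legendre_poly_cong:
  assumes u: "p_integral p u"
  shows "qcong (legendre_poly n (1 - 2 * u)) (binom_sq_poly n u) p"
proof -
  have "legendre_poly n (1 - 2 * u)
      = (\<Sum>j\<le>n. of_int (int (n choose j) * int (n + j choose j) * (-1) ^ j) * u ^ j)"
    by (simp add: legendre_poly_murphy power_minus[of u] mult_ac)
  also have "qcong \<dots> (\<Sum>j\<le>n. of_int (int ((n choose j)\<^sup>2)) * u ^ j) p"
  proof (rule qcong_sum[OF prime])
    fix j assume "j \<in> {..n}"
    then have "[int (n choose j) * int (n + j choose j) * (-1) ^ j
        = int (n choose j) * ((-1) ^ j * int (n choose j)) * (-1) ^ j] (mod int p)"
      by (intro cong_mult binomial_add_cong cong_refl) simp
    also have "int (n choose j) * ((-1) ^ j * int (n choose j)) * (-1) ^ j = int ((n choose j)\<^sup>2)"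
      by (simp add: power2_eq_square algebra_simps flip: power_add)
    finally show "qcong (of_int (int (n choose j) * int (n + j choose j) * (-1) ^ j) * u ^ j)
        (of_int (int ((n choose j)\<^sup>2)) * u ^ j) p"
      by (rule qcong_of_int_mult[OF prime _ p_integral_power[OF prime u]])
  qed
  finally show ?thesis by (simp add: binom_sq_poly_def)
qed

lemma central_binom_sum_cong:
  assumes c: "p_integral p c"
  shows "qcong (\<Sum>k\<le>n. of_nat ((2 * k choose k)\<^sup>2) * (c / 16) ^ k) (binom_sq_poly n c) p"
  unfolding binom_sq_poly_def
proof (rule qcong_sum[OF prime])
  fix k assume "k \<in> {..n}"
  then have "[int (2 * k choose k) ^ 2 = ((-4) ^ k * int (n choose k)) ^ 2] (mod int p)"
    by (intro cong_pow central_binomial_cong) simp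
  also have "((-4) ^ k * int (n choose k)) ^ 2 = 16 ^ k * int ((n choose k)\<^sup>2)"
  proof -
    have "((-4 :: int) ^ k)\<^sup>2 = ((-4)\<^sup>2) ^ k" by (metis power_mult mult.commute)
    then show ?thesis by (simp add: power_mult_distrib)
  qed
  finally have "qcong (of_int (int (2 * k choose k) ^ 2) * (c / 16) ^ k)
      (of_int (16 ^ k * int ((n choose k)\<^sup>2)) * (c / 16) ^ k) p"
    using p_integral_divide[OF prime c coprime_16]
    by (intro qcong_of_int_mult[OF prime] p_integral_power[OF prime]) simp_all
  then show "qcong (of_nat ((2 * k choose k)\<^sup>2) * (c / 16) ^ k) (of_nat ((n choose k)\<^sup>2) * c ^ k) p"
    by (simp add: power_divide)
qed

text \<open>Here \<open>s\<close> absorbs the factor \<open>u\<^sup>n\<close> of the symmetry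
  \<open>binom_sq_poly n (1/u) = u\<^sup>-\<^sup>n binom_sq_poly n u\<close>.\<close>
lemma central_binom_sum_reflect_cong:
  fixes u s :: int
  assumes s: "s\<^sup>2 = 1" and us: "[u ^ n = s] (mod int p)"
  shows "qcong (of_int s * (\<Sum>k\<le>n. of_nat ((2 * k choose k)\<^sup>2) * (1 / (16 * of_int u)) ^ k))
      (binom_sq_poly n (of_int u)) p"
proof -
  have uns: "[u ^ n * s = 1] (mod int p)"
    using cong_mult[OF us cong_refl, of s] s by (simp add: power2_eq_square)
  then have "coprime (u ^ n) (int p)"
    by (metis cong_imp_coprime cong_sym coprime_1_left coprime_mult_left_iff)
  then have "coprime u (int p)" using n_pos by simp
  then have u0: "u \<noteq> 0" using prime by (auto simp: prime_gt_1_nat)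
  have "p_integral p (1 / of_int u)"
    using p_integral_of_int_divide[OF \<open>coprime u (int p)\<close>, of 1] by simp
  from central_binom_sum_cong[OF this]
  have "qcong (\<Sum>k\<le>n. of_nat ((2 * k choose k)\<^sup>2) * (1 / (16 * of_int u)) ^ k)
      (1 / of_int (u ^ n) * binom_sq_poly n (of_int u)) p"
    using binom_sq_poly_reflect[of "of_int u" n] u0 by (simp add: power_one_over mult.commute)
  also have "qcong (1 / of_int (u ^ n) * binom_sq_poly n (of_int u)) (of_int s * binom_sq_poly n (of_int u)) p"
    by (intro qcong_mult[OF prime] qcong_inverse_of_int[OF prime uns] qcong_refl
        p_integral_binom_sq_poly[OF prime] p_integral_of_int)
  finally have "qcong (of_int s * (\<Sum>k\<le>n. of_nat ((2 * k choose k)\<^sup>2) * (1 / (16 * of_int u)) ^ k))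
      (of_int s * (of_int s * binom_sq_poly n (of_int u))) p"
    by (intro qcong_mult[OF prime] qcong_refl p_integral_of_int)
  also have "of_int s * (of_int s * binom_sq_poly n (of_int u)) = binom_sq_poly n (of_int u)"
    using arg_cong[OF s, of "of_int :: int \<Rightarrow> rat"] by (simp add: power2_eq_square)
  finally show ?thesis .
qed

lemma Legendre_cubic_sum_binom_sq_poly_cong:
  fixes e r a u :: int
  assumes e: "[e * (- a) ^ n = -1] (mod int p)"
  shows "qcong (of_int e * of_int (\<Sum>x\<in>{0..<int p}. Legendre ((x - r) * (x - r - a) * (x - r - a * u)) (int p)))
      (binom_sq_poly n (of_int u)) p"
proof -
  define T where "T = (\<Sum>k\<le>n. int ((n choose k)\<^sup>2) * u ^ k)"
  have "(\<Sum>k\<le>n. int ((n choose k)\<^sup>2) * a ^ (n - k) * (a * u) ^ k) = a ^ n * T"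
    unfolding T_def sum_distrib_left
  proof (intro sum.cong refl)
    fix k assume "k \<in> {..n}"
    then have "a ^ n = a ^ (n - k) * a ^ k" by (simp flip: power_add)
    then show "int ((n choose k)\<^sup>2) * a ^ (n - k) * (a * u) ^ k = a ^ n * (int ((n choose k)\<^sup>2) * u ^ k)"
      by (simp add: power_mult_distrib algebra_simps)
  qed
  then have "[(\<Sum>x\<in>{0..<int p}. Legendre ((x - r) * (x - r - a) * (x - r - a * u)) (int p))
      = - ((-1) ^ n * (a ^ n * T))] (mod int p)"
    using Legendre_cubic_sum_cong[of r a "a * u"] by simp
  then have "[e * (\<Sum>x\<in>{0..<int p}. Legendre ((x - r) * (x - r - a) * (x - r - a * u)) (int p))
      = e * (- ((-1) ^ n * (a ^ n * T)))] (mod int p)"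
    by (rule cong_mult[OF cong_refl])
  also have "e * (- ((-1) ^ n * (a ^ n * T))) = - (e * (- a) ^ n) * T"
    by (simp add: power_minus[of a n] algebra_simps)
  also have "[\<dots> = - (-1) * T] (mod int p)"
    by (intro cong_mult cong_uminus e cong_refl)
  finally have "qcong (of_int (e * (\<Sum>x\<in>{0..<int p}. Legendre ((x - r) * (x - r - a) * (x - r - a * u)) (int p))))
      (of_int T) p"
    by (intro qcong_of_int[OF prime]) simp
  then show ?thesis unfolding T_def binom_sq_poly_def by simp
qed

lemma Legendre_cong_power: "[Legendre a (int p) = a ^ n] (mod int p)"
  using euler_criterion[OF prime p_gt_2, of a] half_p_minus_1 by simp

lemma four_power_cong: "[4 ^ n = (1 :: int)] (mod int p)"
proof -
  have "(4 :: int) ^ n = 2 ^ (p - 1)"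
    unfolding p_minus_1 by (simp add: power_mult)
  also have "[\<dots> = 1] (mod int p)" using fermat_theorem_int[OF prime, of 2] p_gt_2 by simp
  finally show ?thesis .
qed

lemma sixteen_power_cong: "[16 ^ n = (1 :: int)] (mod int p)"
  using cong_mult[OF four_power_cong four_power_cong] by (simp flip: power_mult_distrib)

lemma eight_power_cong: "[8 ^ n = Legendre 2 (int p)] (mod int p)"
  using cong_mult[OF cong_sym[OF Legendre_cong_power[of 2]] four_power_cong]
  by (simp flip: power_mult_distrib)

lemma Legendre_3_cong:
  assumes "p > 3"
  shows "[- Legendre (int p) 3 * (- 3) ^ n = -1] (mod int p)"
proof -
  have reciprocity: "Legendre (int p) 3 * Legendre 3 (int p) = (-1) ^ n"
    using Quadratic_Reciprocity[OF prime p_gt_2, of 3] assms half_p_minus_1 by simp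
  have "- Legendre (int p) 3 * (- 3) ^ n = - (Legendre (int p) 3 * ((-1) ^ n * 3 ^ n))"
    by (simp add: power_minus[of 3 n])
  also have "[\<dots> = - (Legendre (int p) 3 * ((-1) ^ n * Legendre 3 (int p)))] (mod int p)"
    by (intro cong_uminus cong_mult cong_refl cong_sym[OF Legendre_cong_power])
  also have "- (Legendre (int p) 3 * ((-1) ^ n * Legendre 3 (int p))) = - ((-1) ^ n * (-1) ^ n)"
    using reciprocity by (simp add: algebra_simps)
  also have "\<dots> = -1" by (simp flip: power_add)
  finally show ?thesis .
qed

lemma congruences_16:
  assumes "p > 3"
  shows "qcong (legendre_poly n (-31)) (\<Sum>k\<le>n. of_nat ((2*k choose k)^2)) p
    \<and> qcong (\<Sum>k\<le>n. of_nat ((2*k choose k)^2)) (\<Sum>k\<le>n. of_nat ((2*k choose k)^2) / (256) ^ k) p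
    \<and> qcong (\<Sum>k\<le>n. of_nat ((2*k choose k)^2) / (256) ^ k) (- of_int (Legendre (int p) 3) * of_int (\<Sum>x\<in>{0..<int p}. Legendre (x^3 - 723*x - 7378) (int p))) p"
proof (rule qcong_chain[OF prime, where t = "binom_sq_poly n 16"])
  show "qcong (legendre_poly n (-31)) (binom_sq_poly n 16) p"
    using legendre_poly_cong[OF p_integral_of_int[of p "16"]] by simp
  show "qcong (\<Sum>k\<le>n. of_nat ((2*k choose k)^2)) (binom_sq_poly n 16) p"
    using central_binom_sum_cong[OF p_integral_of_int[of p "16"]] by simp
  show "qcong (\<Sum>k\<le>n. of_nat ((2*k choose k)^2) / (256) ^ k) (binom_sq_poly n 16) p"
    using central_binom_sum_reflect_cong[of 1 16] sixteen_power_cong by (simp add: sum_divide_power)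
  have "(\<Sum>x\<in>{0..<int p}. Legendre (x^3 - 723*x - 7378) (int p))
      = (\<Sum>x\<in>{0..<int p}. Legendre ((x - -17) * (x - -17 - 3) * (x - -17 - 3 * 16)) (int p))"
    by (intro sum.cong refl arg_cong[where f = "\<lambda>t. Legendre t (int p)"]) (simp add: power3_eq_cube algebra_simps)
  then show "qcong (- of_int (Legendre (int p) 3) * of_int (\<Sum>x\<in>{0..<int p}. Legendre (x^3 - 723*x - 7378) (int p))) (binom_sq_poly n 16) p"
    using Legendre_cubic_sum_binom_sq_poly_cong[OF Legendre_3_cong[OF assms], of "-17" 16] by simp
qed

lemma congruences_minus_16:
  shows "qcong (legendre_poly n (33)) (\<Sum>k\<le>n. (-1) ^ k * of_nat ((2*k choose k)^2)) p
    \<and> qcong (\<Sum>k\<le>n. (-1) ^ k * of_nat ((2*k choose k)^2)) ((-1) ^ n * (\<Sum>k\<le>n. of_nat ((2*k choose k)^2) / (-256) ^ k)) p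
    \<and> qcong ((-1) ^ n * (\<Sum>k\<le>n. of_nat ((2*k choose k)^2) / (-256) ^ k)) ((-1) ^ (n + 1) * of_int (\<Sum>x\<in>{0..<int p}. Legendre (x^3 - 91*x + 330) (int p))) p"
proof (rule qcong_chain[OF prime, where t = "binom_sq_poly n (-16)"])
  show "qcong (legendre_poly n 33) (binom_sq_poly n (-16)) p"
    using legendre_poly_cong[OF p_integral_of_int[of p "(-16)"]] by simp
  show "qcong (\<Sum>k\<le>n. (-1) ^ k * of_nat ((2*k choose k)^2)) (binom_sq_poly n (-16)) p"
    using central_binom_sum_cong[OF p_integral_of_int[of p "(-16)"]] by (simp add: mult.commute)
  show "qcong ((-1) ^ n * (\<Sum>k\<le>n. of_nat ((2*k choose k)^2) / (-256) ^ k)) (binom_sq_poly n (-16)) p"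
    using central_binom_sum_reflect_cong[OF minus_one_power_square cong_uminus_pow[OF sixteen_power_cong]]
    by (simp add: sum_divide_power)
  have "(\<Sum>x\<in>{0..<int p}. Legendre (x^3 - 91*x + 330) (int p))
      = (\<Sum>x\<in>{0..<int p}. Legendre ((x - 5) * (x - 5 - 1) * (x - 5 - 1 * (-16))) (int p))"
    by (intro sum.cong refl arg_cong[where f = "\<lambda>t. Legendre t (int p)"]) (simp add: power3_eq_cube algebra_simps)
  then show "qcong ((-1) ^ (n + 1) * of_int (\<Sum>x\<in>{0..<int p}. Legendre (x^3 - 91*x + 330) (int p))) (binom_sq_poly n (-16)) p"
    using Legendre_cubic_sum_binom_sq_poly_cong[of "(-1) ^ (n + 1)" 1 5 "-16"] by simp
qed

lemma congruences_8:
  shows "qcong (legendre_poly n (-15)) (\<Sum>k\<le>n. of_nat ((2*k choose k)^2) / (2) ^ k) p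
    \<and> qcong (\<Sum>k\<le>n. of_nat ((2*k choose k)^2) / (2) ^ k) (of_int (Legendre (2::int) (int p)) * (\<Sum>k\<le>n. of_nat ((2*k choose k)^2) / (128) ^ k)) p
    \<and> qcong (of_int (Legendre (2::int) (int p)) * (\<Sum>k\<le>n. of_nat ((2*k choose k)^2) / (128) ^ k)) ((-1) ^ (n + 1) * of_int (\<Sum>x\<in>{0..<int p}. Legendre (x^3 - 19*x - 30) (int p))) p"
proof (rule qcong_chain[OF prime, where t = "binom_sq_poly n 8"])
  show "qcong (legendre_poly n (-15)) (binom_sq_poly n 8) p"
    using legendre_poly_cong[OF p_integral_of_int[of p "8"]] by simp
  show "qcong (\<Sum>k\<le>n. of_nat ((2*k choose k)^2) / 2 ^ k) (binom_sq_poly n 8) p"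
    using central_binom_sum_cong[OF p_integral_of_int[of p "8"]] by (simp add: sum_divide_power)
  show "qcong (of_int (Legendre 2 (int p)) * (\<Sum>k\<le>n. of_nat ((2*k choose k)^2) / 128 ^ k)) (binom_sq_poly n 8) p"
    using central_binom_sum_reflect_cong[OF Legendre_square_small eight_power_cong] p_gt_2
    by (simp add: sum_divide_power)
  have "(\<Sum>x\<in>{0..<int p}. Legendre (x^3 - 19*x - 30) (int p))
      = (\<Sum>x\<in>{0..<int p}. Legendre ((x - -3) * (x - -3 - 1) * (x - -3 - 1 * 8)) (int p))"
    by (intro sum.cong refl arg_cong[where f = "\<lambda>t. Legendre t (int p)"]) (simp add: power3_eq_cube algebra_simps)
  then show "qcong ((-1) ^ (n + 1) * of_int (\<Sum>x\<in>{0..<int p}. Legendre (x^3 - 19*x - 30) (int p))) (binom_sq_poly n 8) p"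
    using Legendre_cubic_sum_binom_sq_poly_cong[of "(-1) ^ (n + 1)" 1 "-3" 8] by simp
qed

lemma congruences_minus_4:
  shows "qcong (legendre_poly n (9)) (\<Sum>k\<le>n. of_nat ((2*k choose k)^2) / (-4) ^ k) p
    \<and> qcong (\<Sum>k\<le>n. of_nat ((2*k choose k)^2) / (-4) ^ k) ((-1) ^ n * (\<Sum>k\<le>n. of_nat ((2*k choose k)^2) / (-64) ^ k)) p
    \<and> qcong ((-1) ^ n * (\<Sum>k\<le>n. of_nat ((2*k choose k)^2) / (-64) ^ k)) ((-1) ^ (n + 1) * of_int (\<Sum>x\<in>{0..<int p}. Legendre (x^3 - 7*x + 6) (int p))) p"
proof (rule qcong_chain[OF prime, where t = "binom_sq_poly n (-4)"])
  show "qcong (legendre_poly n 9) (binom_sq_poly n (-4)) p"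
    using legendre_poly_cong[OF p_integral_of_int[of p "(-4)"]] by simp
  show "qcong (\<Sum>k\<le>n. of_nat ((2*k choose k)^2) / (-4) ^ k) (binom_sq_poly n (-4)) p"
    using central_binom_sum_cong[OF p_integral_of_int[of p "(-4)"]] by (simp add: sum_divide_power)
  show "qcong ((-1) ^ n * (\<Sum>k\<le>n. of_nat ((2*k choose k)^2) / (-64) ^ k)) (binom_sq_poly n (-4)) p"
    using central_binom_sum_reflect_cong[OF minus_one_power_square cong_uminus_pow[OF four_power_cong]]
    by (simp add: sum_divide_power)
  have "(\<Sum>x\<in>{0..<int p}. Legendre (x^3 - 7*x + 6) (int p))
      = (\<Sum>x\<in>{0..<int p}. Legendre ((x - 1) * (x - 1 - 1) * (x - 1 - 1 * (-4))) (int p))"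
    by (intro sum.cong refl arg_cong[where f = "\<lambda>t. Legendre t (int p)"]) (simp add: power3_eq_cube algebra_simps)
  then show "qcong ((-1) ^ (n + 1) * of_int (\<Sum>x\<in>{0..<int p}. Legendre (x^3 - 7*x + 6) (int p))) (binom_sq_poly n (-4)) p"
    using Legendre_cubic_sum_binom_sq_poly_cong[of "(-1) ^ (n + 1)" 1 1 "-4"] by simp
qed

lemma congruences_minus_2:
  assumes "p > 3"
  shows "qcong (legendre_poly n (5)) (\<Sum>k\<le>n. of_nat ((2*k choose k)^2) / (-8) ^ k) p
    \<and> qcong (\<Sum>k\<le>n. of_nat ((2*k choose k)^2) / (-8) ^ k) (of_int (Legendre (-2::int) (int p)) * (\<Sum>k\<le>n. of_nat ((2*k choose k)^2) / (-32) ^ k)) p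
    \<and> qcong (of_int (Legendre (-2::int) (int p)) * (\<Sum>k\<le>n. of_nat ((2*k choose k)^2) / (-32) ^ k)) (- of_int (Legendre (int p) 3) * of_int (\<Sum>x\<in>{0..<int p}. Legendre (x^3 - 21*x + 20) (int p))) p"
proof (rule qcong_chain[OF prime, where t = "binom_sq_poly n (-2)"])
  show "qcong (legendre_poly n 5) (binom_sq_poly n (-2)) p"
    using legendre_poly_cong[OF p_integral_of_int[of p "(-2)"]] by simp
  show "qcong (\<Sum>k\<le>n. of_nat ((2*k choose k)^2) / (-8) ^ k) (binom_sq_poly n (-2)) p"
    using central_binom_sum_cong[OF p_integral_of_int[of p "(-2)"]] by (simp add: sum_divide_power)
  show "qcong (of_int (Legendre (-2) (int p)) * (\<Sum>k\<le>n. of_nat ((2*k choose k)^2) / (-32) ^ k)) (binom_sq_poly n (-2)) p"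
    using central_binom_sum_reflect_cong[OF Legendre_square_small cong_sym[OF Legendre_cong_power], of "-2"] p_gt_2
    by (simp add: sum_divide_power)
  have "(\<Sum>x\<in>{0..<int p}. Legendre (x^3 - 21*x + 20) (int p))
      = (\<Sum>x\<in>{0..<int p}. Legendre ((x - 1) * (x - 1 - 3) * (x - 1 - 3 * (-2))) (int p))"
    by (intro sum.cong refl arg_cong[where f = "\<lambda>t. Legendre t (int p)"]) (simp add: power3_eq_cube algebra_simps)
  then show "qcong (- of_int (Legendre (int p) 3) * of_int (\<Sum>x\<in>{0..<int p}. Legendre (x^3 - 21*x + 20) (int p))) (binom_sq_poly n (-2)) p"
    using Legendre_cubic_sum_binom_sq_poly_cong[OF Legendre_3_cong[OF assms], of 1 "-2"] by simp
qed

end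

theorem theorem2p12:
  fixes p :: nat
  assumes "prime p" and "p > 3"
  defines "n \<equiv> (p - 1) div 2"
  shows
   "(qcong (legendre_poly n (-31)) ((\<Sum>k\<le>n. of_nat ((2*k choose k)^2))) p)
    \<and> (qcong ((\<Sum>k\<le>n. of_nat ((2*k choose k)^2))) ((\<Sum>k\<le>n. of_nat ((2*k choose k)^2) / (256) ^ k)) p)
    \<and> (qcong ((\<Sum>k\<le>n. of_nat ((2*k choose k)^2) / (256) ^ k)) (- of_int (Legendre (int p) 3) * of_int (\<Sum>x\<in>{0..<int p}. Legendre (x^3 - 723*x - 7378) (int p))) p)
    \<and> (qcong (legendre_poly n (33)) ((\<Sum>k\<le>n. (-1) ^ k * of_nat ((2*k choose k)^2))) p)
    \<and> (qcong ((\<Sum>k\<le>n. (-1) ^ k * of_nat ((2*k choose k)^2))) ((-1) ^ ((p - 1) div 2) * (\<Sum>k\<le>n. of_nat ((2*k choose k)^2) / (-256) ^ k)) p)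
    \<and> (qcong ((-1) ^ ((p - 1) div 2) * (\<Sum>k\<le>n. of_nat ((2*k choose k)^2) / (-256) ^ k)) ((-1) ^ ((p + 1) div 2) * of_int (\<Sum>x\<in>{0..<int p}. Legendre (x^3 - 91*x + 330) (int p))) p)
    \<and> (qcong (legendre_poly n (-15)) ((\<Sum>k\<le>n. of_nat ((2*k choose k)^2) / (2) ^ k)) p)
    \<and> (qcong ((\<Sum>k\<le>n. of_nat ((2*k choose k)^2) / (2) ^ k)) (of_int (Legendre (2::int) (int p)) * (\<Sum>k\<le>n. of_nat ((2*k choose k)^2) / (128) ^ k)) p)
    \<and> (qcong (of_int (Legendre (2::int) (int p)) * (\<Sum>k\<le>n. of_nat ((2*k choose k)^2) / (128) ^ k)) ((-1) ^ ((p + 1) div 2) * of_int (\<Sum>x\<in>{0..<int p}. Legendre (x^3 - 19*x - 30) (int p))) p)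
    \<and> (qcong (legendre_poly n (9)) ((\<Sum>k\<le>n. of_nat ((2*k choose k)^2) / (-4) ^ k)) p)
    \<and> (qcong ((\<Sum>k\<le>n. of_nat ((2*k choose k)^2) / (-4) ^ k)) ((-1) ^ ((p - 1) div 2) * (\<Sum>k\<le>n. of_nat ((2*k choose k)^2) / (-64) ^ k)) p)
    \<and> (qcong ((-1) ^ ((p - 1) div 2) * (\<Sum>k\<le>n. of_nat ((2*k choose k)^2) / (-64) ^ k)) ((-1) ^ ((p + 1) div 2) * of_int (\<Sum>x\<in>{0..<int p}. Legendre (x^3 - 7*x + 6) (int p))) p)
    \<and> (qcong (legendre_poly n (5)) ((\<Sum>k\<le>n. of_nat ((2*k choose k)^2) / (-8) ^ k)) p)
    \<and> (qcong ((\<Sum>k\<le>n. of_nat ((2*k choose k)^2) / (-8) ^ k)) (of_int (Legendre (-2::int) (int p)) * (\<Sum>k\<le>n. of_nat ((2*k choose k)^2) / (-32) ^ k)) p)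
    \<and> (qcong (of_int (Legendre (-2::int) (int p)) * (\<Sum>k\<le>n. of_nat ((2*k choose k)^2) / (-32) ^ k)) (- of_int (Legendre (int p) 3) * of_int (\<Sum>x\<in>{0..<int p}. Legendre (x^3 - 21*x + 20) (int p))) p)"
proof -
  have "odd p" using assms prime_odd_nat by auto
  then have p_eq: "2 * n + 1 = p" unfolding n_def by presburger
  have "(p + 1) div 2 = n + 1" using p_eq by presburger
  then show ?thesis
    unfolding n_def[symmetric]
    using congruences_16[OF assms(1) p_eq assms(2)] congruences_minus_16[OF assms(1) p_eq]
      congruences_8[OF assms(1) p_eq] congruences_minus_4[OF assms(1) p_eq]
      congruences_minus_2[OF assms(1) p_eq assms(2)]
    by simp
qed

end
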